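(* Let $\varepsilon\colon\mathbf 2\to\mathbf 2^2$ be $\varepsilon(x)=(x,x)$ and $\pi\colon\mathbf 2^2\to\mathbf 2$ be $\pi(x,y)=x\vee y$, where $\mathbf 2=\{0,1\}$; these form a commutative triangle $\mathbf 2\xrightarrow{\varepsilon}\mathbf 2^2\xrightarrow{\pi}\mathbf 2$ with $\pi\circ\varepsilon=\mathrm{id}_{\mathbf 2}$, viewed as a diagram indexed by the three-element chain $0<1<2$. There is no lifting of this diagram, with respect to $\operatorname{Con}_c$, by lattices and lattice homomorphisms $K_0\xrightarrow{e}L\xrightarrow{p}K_1$ in which the morphism $f=p\circ e\colon K_0\to K_1$ lifting $\mathrm{id}_{\mathbf 2}$ is an isomorphism.
   Context: $\mathbf 2$ and $\mathbf 2^2$ are regarded as $\{\vee,0\}$-semilattices. $\operatorname{Con}_c$ sends a lattice to its $\{\vee,0\}$-semilattice of compact (finitely generated) congruences and a lattice homomorphism $f\colon K\to L$ to the map sending a compact congruence $\alpha$ of $K$ to the congruence of $L$ generated by $\{(f(x),f(y)):(x,y)\in\alpha\}$. A diagram of lattices lifts a diagram of semilattices of the same shape if its image under $\operatorname{Con}_c$ is naturally isomorphic to it. *)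

theory Defs
  imports Main
begin

definition lat_cong :: "('a::lattice \<times> 'a) set \<Rightarrow> bool" where
  "lat_cong \<theta> \<longleftrightarrow> equiv UNIV \<theta> \<and>
     (\<forall>a b c. (a, b) \<in> \<theta> \<longrightarrow> (sup a c, sup b c) \<in> \<theta> \<and> (inf a c, inf b c) \<in> \<theta>)"

definition Cg :: "('a::lattice \<times> 'a) set \<Rightarrow> ('a \<times> 'a) set" where
  "Cg X = \<Inter>{\<theta>. lat_cong \<theta> \<and> X \<subseteq> \<theta>}"

definition Con_c :: "('a::lattice \<times> 'a) set set" where
  "Con_c = {Cg X | X. finite X}"

definition cjoin :: "('a::lattice \<times> 'a) set \<Rightarrow> ('a \<times> 'a) set \<Rightarrow> ('a \<times> 'a) set" where
  "cjoin \<alpha> \<beta> = Cg (\<alpha> \<union> \<beta>)"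

definition czero :: "('a::lattice \<times> 'a) set" where
  "czero = Cg {}"

definition Con_c_map :: "('a::lattice \<Rightarrow> 'b::lattice) \<Rightarrow> ('a \<times> 'a) set \<Rightarrow> ('b \<times> 'b) set" where
  "Con_c_map f \<alpha> = Cg ((\<lambda>(x, y). (f x, f y)) ` \<alpha>)"

definition lattice_hom :: "('a::lattice \<Rightarrow> 'b::lattice) \<Rightarrow> bool" where
  "lattice_hom f \<longleftrightarrow> (\<forall>x y. f (sup x y) = sup (f x) (f y) \<and> f (inf x y) = inf (f x) (f y))"

text \<open>2 = bool with join = disjunction and 0 = False; 2^2 = bool \<times> bool componentwise.\<close>
definition eps2 :: "bool \<Rightarrow> bool \<times> bool" where
  "eps2 x = (x, x)"

definition pi2 :: "bool \<times> bool \<Rightarrow> bool" where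
  "pi2 z = (fst z \<or> snd z)"

definition iso_to_2 :: "(('a::lattice \<times> 'a) set \<Rightarrow> bool) \<Rightarrow> bool" where
  "iso_to_2 \<phi> \<longleftrightarrow> bij_betw \<phi> Con_c (UNIV :: bool set) \<and>
     (\<forall>\<alpha>\<in>Con_c. \<forall>\<beta>\<in>Con_c. \<phi> (cjoin \<alpha> \<beta>) = (\<phi> \<alpha> \<or> \<phi> \<beta>)) \<and> \<phi> czero = False"

definition iso_to_22 :: "(('a::lattice \<times> 'a) set \<Rightarrow> bool \<times> bool) \<Rightarrow> bool" where
  "iso_to_22 \<phi> \<longleftrightarrow> bij_betw \<phi> Con_c (UNIV :: (bool \<times> bool) set) \<and>
     (\<forall>\<alpha>\<in>Con_c. \<forall>\<beta>\<in>Con_c.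
        \<phi> (cjoin \<alpha> \<beta>) = (fst (\<phi> \<alpha>) \<or> fst (\<phi> \<beta>), snd (\<phi> \<alpha>) \<or> snd (\<phi> \<beta>))) \<and>
     \<phi> czero = (False, False)"

end

theory Submission
  imports Defs
begin

text \<open>Since \<open>\<pi>(x, y) = 0\<close> only for \<open>x = y = 0\<close>, the map \<open>Con_c p\<close> sends no nonzero compact
  congruence to zero, which forces \<open>p\<close> to be injective; as \<open>p \<circ> e\<close> is bijective, \<open>p\<close> is also
  surjective, hence a lattice isomorphism. By functoriality \<open>Con_c p\<close> is then injective, but
  \<open>\<pi>\<close> identifies \<open>(1, 0)\<close> with \<open>(0, 1)\<close>.\<close>

lemma lat_congI:
  assumes "\<And>x. (x, x) \<in> \<theta>"
    and "\<And>x y. (x, y) \<in> \<theta> \<Longrightarrow> (y, x) \<in> \<theta>"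
    and "\<And>x y z. (x, y) \<in> \<theta> \<Longrightarrow> (y, z) \<in> \<theta> \<Longrightarrow> (x, z) \<in> \<theta>"
    and "\<And>a b c. (a, b) \<in> \<theta> \<Longrightarrow> (sup a c, sup b c) \<in> \<theta> \<and> (inf a c, inf b c) \<in> \<theta>"
  shows "lat_cong \<theta>"
proof -
  have "refl \<theta>"
    using assms(1) by (simp add: refl_on_def)
  moreover have "sym \<theta>"
    by (rule symI) (rule assms(2))
  moreover have "trans \<theta>"
    by (rule transI) (rule assms(3))
  ultimately show ?thesis
    unfolding lat_cong_def equiv_def by (simp add: assms(4))
qed

lemma
  assumes "lat_cong \<theta>"
  shows lat_cong_refl: "(x, x) \<in> \<theta>"
    and lat_cong_sym: "(x, y) \<in> \<theta> \<Longrightarrow> (y, x) \<in> \<theta>"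
    and lat_cong_trans: "(x, y) \<in> \<theta> \<Longrightarrow> (y, z) \<in> \<theta> \<Longrightarrow> (x, z) \<in> \<theta>"
    and lat_cong_sup: "(x, y) \<in> \<theta> \<Longrightarrow> (sup x z, sup y z) \<in> \<theta>"
    and lat_cong_inf: "(x, y) \<in> \<theta> \<Longrightarrow> (inf x z, inf y z) \<in> \<theta>"
proof -
  have "equiv UNIV \<theta>"
    using assms unfolding lat_cong_def by blast
  then show "(x, x) \<in> \<theta>" "(x, y) \<in> \<theta> \<Longrightarrow> (y, x) \<in> \<theta>"
    "(x, y) \<in> \<theta> \<Longrightarrow> (y, z) \<in> \<theta> \<Longrightarrow> (x, z) \<in> \<theta>"
    by (simp_all add: equiv_def refl_on_def) (meson symD transD)+
  show "(x, y) \<in> \<theta> \<Longrightarrow> (sup x z, sup y z) \<in> \<theta>" "(x, y) \<in> \<theta> \<Longrightarrow> (inf x z, inf y z) \<in> \<theta>"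
    using assms unfolding lat_cong_def by blast+
qed

lemma lat_cong_Inter:
  assumes "\<And>\<theta>. \<theta> \<in> S \<Longrightarrow> lat_cong \<theta>"
  shows "lat_cong (\<Inter>S)"
proof (rule lat_congI)
  show "(x, x) \<in> \<Inter>S" for x
    using assms lat_cong_refl by blast
  show "(y, x) \<in> \<Inter>S" if "(x, y) \<in> \<Inter>S" for x y
    using assms lat_cong_sym that by blast
  show "(x, z) \<in> \<Inter>S" if "(x, y) \<in> \<Inter>S" and "(y, z) \<in> \<Inter>S" for x y z
    using assms lat_cong_trans that by blast
  show "(sup x z, sup y z) \<in> \<Inter>S \<and> (inf x z, inf y z) \<in> \<Inter>S" if "(x, y) \<in> \<Inter>S" for x y z
    using assms lat_cong_sup lat_cong_inf that by blast
qed

lemma lat_cong_Id: "lat_cong (Id :: ('a::lattice \<times> 'a) set)"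
  by (rule lat_congI) auto

lemma lat_cong_vimage:
  assumes "lattice_hom f" and "lat_cong \<theta>"
  shows "lat_cong {(x, y). (f x, f y) \<in> \<theta>}"
  using assms by (intro lat_congI)
    (auto simp: lattice_hom_def intro: lat_cong_refl lat_cong_sym lat_cong_trans lat_cong_sup lat_cong_inf)

lemma lat_cong_Cg: "lat_cong (Cg X)"
  unfolding Cg_def by (rule lat_cong_Inter) simp

lemma Cg_upper: "X \<subseteq> Cg X"
  unfolding Cg_def by blast

lemma Cg_least: "lat_cong \<theta> \<Longrightarrow> X \<subseteq> \<theta> \<Longrightarrow> Cg X \<subseteq> \<theta>"
  unfolding Cg_def by blast

lemma Cg_eq_self: "lat_cong \<theta> \<Longrightarrow> Cg \<theta> = \<theta>"
  by (rule equalityI[OF Cg_least[OF _ subset_refl] Cg_upper])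

lemma Cg_subset_Id: "X \<subseteq> Id \<Longrightarrow> Cg X = Id"
  using Cg_least[OF lat_cong_Id] lat_cong_refl[OF lat_cong_Cg] by blast

lemma czero_eq_Id: "czero = Id"
  unfolding czero_def by (simp add: Cg_subset_Id)

lemma czero_in_Con_c: "czero \<in> Con_c"
  unfolding czero_def Con_c_def by blast

lemma lat_cong_Con_c: "\<alpha> \<in> Con_c \<Longrightarrow> lat_cong \<alpha>"
  unfolding Con_c_def using lat_cong_Cg by blast

lemma Con_c_map_Cg:
  assumes "lattice_hom f"
  shows "Con_c_map f (Cg X) = Con_c_map f X"
proof -
  let ?F = "\<lambda>(x, y). (f x, f y)"
  have "X \<subseteq> {(x, y). (f x, f y) \<in> Cg (?F ` X)}"
    using Cg_upper by fastforce
  then have "Cg X \<subseteq> {(x, y). (f x, f y) \<in> Cg (?F ` X)}"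
    by (rule Cg_least[OF lat_cong_vimage[OF assms lat_cong_Cg]])
  then have "?F ` Cg X \<subseteq> Cg (?F ` X)"
    by auto
  moreover have "?F ` X \<subseteq> Cg (?F ` Cg X)"
    using Cg_upper[of X] Cg_upper[of "?F ` Cg X"] by blast
  ultimately show ?thesis
    unfolding Con_c_map_def by (intro equalityI Cg_least[OF lat_cong_Cg])
qed

lemma Con_c_map_comp:
  assumes "lattice_hom g"
  shows "Con_c_map g (Con_c_map f \<alpha>) = Con_c_map (g \<circ> f) \<alpha>"
  unfolding Con_c_map_def[of f] Con_c_map_Cg[OF assms]
  by (simp add: Con_c_map_def image_image case_prod_beta)

lemma Con_c_map_id: "lat_cong \<alpha> \<Longrightarrow> Con_c_map id \<alpha> = \<alpha>"
  by (simp add: Con_c_map_def Cg_eq_self)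

lemma Con_c_map_in_Con_c:
  assumes "lattice_hom f" and "\<alpha> \<in> Con_c"
  shows "Con_c_map f \<alpha> \<in> Con_c"
proof -
  obtain X where \<alpha>: "\<alpha> = Cg X" and "finite X"
    using assms(2) unfolding Con_c_def by blast
  have "Con_c_map f \<alpha> = Con_c_map f X"
    unfolding \<alpha> by (rule Con_c_map_Cg[OF assms(1)])
  then show ?thesis
    using finite_imageI[OF \<open>finite X\<close>] unfolding Con_c_def Con_c_map_def by blast
qed

lemma lattice_hom_inv:
  assumes "bij f" and "lattice_hom f"
  shows "lattice_hom (inv f)"
proof -
  have "inv f (sup x y) = sup (inv f x) (inv f y)" "inv f (inf x y) = inf (inv f x) (inv f y)" for x y
    using assms unfolding lattice_hom_def by (metis bij_inv_eq_iff)+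
  then show ?thesis
    unfolding lattice_hom_def by blast
qed

lemma inj_on_Con_c_map:
  assumes "bij f" and "lattice_hom f"
  shows "inj_on (Con_c_map f) Con_c"
proof (rule inj_on_inverseI)
  fix \<alpha> :: "('a \<times> 'a) set"
  assume "\<alpha> \<in> Con_c"
  then show "Con_c_map (inv f) (Con_c_map f \<alpha>) = \<alpha>"
    using assms by (simp add: Con_c_map_comp lattice_hom_inv bij_is_inj Con_c_map_id lat_cong_Con_c)
qed

lemma inj_if_Con_c_map_reflects_czero:
  assumes "lattice_hom f"
    and reflects: "\<And>\<alpha>. \<alpha> \<in> Con_c \<Longrightarrow> Con_c_map f \<alpha> = czero \<Longrightarrow> \<alpha> = czero"
  shows "inj f"
proof (rule injI)
  fix u v
  assume "f u = f v"
  then have "Con_c_map f (Cg {(u, v)}) = czero"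
    unfolding Con_c_map_Cg[OF assms(1)] by (simp add: Con_c_map_def Cg_subset_Id czero_eq_Id)
  moreover have "Cg {(u, v)} \<in> Con_c"
    unfolding Con_c_def by blast
  ultimately have "Cg {(u, v)} = Id"
    using reflects czero_eq_Id by metis
  then show "u = v"
    using Cg_upper[of "{(u, v)}"] by blast
qed

lemma iso_to_22_eq_zero_iff:
  assumes "iso_to_22 \<phi>" and "\<alpha> \<in> Con_c"
  shows "\<phi> \<alpha> = (False, False) \<longleftrightarrow> \<alpha> = czero"
proof -
  have "inj_on \<phi> Con_c" and "\<phi> czero = (False, False)"
    using assms(1) unfolding iso_to_22_def bij_betw_def by blast+
  then show ?thesis
    using assms(2) czero_in_Con_c by (metis inj_onD)
qed

theorem theorem8p1:
  fixes e :: "'k0::lattice \<Rightarrow> 'l::lattice" and p :: "'l \<Rightarrow> 'k1::lattice"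
  shows "\<not> (lattice_hom e \<and> lattice_hom p \<and> bij (p \<circ> e) \<and>
    (\<exists>(\<phi>0 :: ('k0 \<times> 'k0) set \<Rightarrow> bool) (\<phi>1 :: ('l \<times> 'l) set \<Rightarrow> bool \<times> bool)
       (\<phi>2 :: ('k1 \<times> 'k1) set \<Rightarrow> bool).
       iso_to_2 \<phi>0 \<and> iso_to_22 \<phi>1 \<and> iso_to_2 \<phi>2 \<and>
       (\<forall>\<alpha>\<in>Con_c. \<phi>1 (Con_c_map e \<alpha>) = eps2 (\<phi>0 \<alpha>)) \<and>
       (\<forall>\<beta>\<in>Con_c. \<phi>2 (Con_c_map p \<beta>) = pi2 (\<phi>1 \<beta>)) \<and>
       (\<forall>\<alpha>\<in>Con_c. \<phi>2 (Con_c_map (p \<circ> e) \<alpha>) = \<phi>0 \<alpha>)))"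
proof clarify
  fix \<phi>1 :: "('l \<times> 'l) set \<Rightarrow> bool \<times> bool" and \<phi>2 :: "('k1 \<times> 'k1) set \<Rightarrow> bool"
  assume hom: "lattice_hom p" and "bij (p \<circ> e)" and "iso_to_22 \<phi>1" and "iso_to_2 \<phi>2"
    and lift_p: "\<forall>\<beta>\<in>Con_c. \<phi>2 (Con_c_map p \<beta>) = pi2 (\<phi>1 \<beta>)"
  have inj2: "inj_on \<phi>2 Con_c" and zero2: "\<phi>2 czero = False"
    using \<open>iso_to_2 \<phi>2\<close> unfolding iso_to_2_def bij_betw_def by blast+
  have "inj p"
  proof (rule inj_if_Con_c_map_reflects_czero[OF hom])
    fix \<alpha> :: "('l \<times> 'l) set"
    assume "\<alpha> \<in> Con_c" and "Con_c_map p \<alpha> = czero"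
    then have "pi2 (\<phi>1 \<alpha>) = False"
      using lift_p zero2 by metis
    then show "\<alpha> = czero"
      using iso_to_22_eq_zero_iff[OF \<open>iso_to_22 \<phi>1\<close> \<open>\<alpha> \<in> Con_c\<close>] by (cases "\<phi>1 \<alpha>") (simp add: pi2_def)
  qed
  moreover have "surj p"
    using bij_is_surj[OF \<open>bij (p \<circ> e)\<close>] by (auto simp: surj_def)
  ultimately have inj_map: "inj_on (Con_c_map p) Con_c"
    using hom by (intro inj_on_Con_c_map bijI)
  obtain a b where a: "a \<in> Con_c" "\<phi>1 a = (True, False)" and b: "b \<in> Con_c" "\<phi>1 b = (False, True)"
    using \<open>iso_to_22 \<phi>1\<close> unfolding iso_to_22_def by (metis UNIV_I bij_betw_def imageE)
  then have "\<phi>2 (Con_c_map p a) = \<phi>2 (Con_c_map p b)"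
    using lift_p by (simp add: pi2_def)
  then have "a = b"
    using inj_onD[OF inj2] inj_onD[OF inj_map] Con_c_map_in_Con_c[OF hom] a(1) b(1) by metis
  with a(2) b(2) show False
    by simp
qed

end
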